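(* Let $S$ be a nonempty set, and in the category $\mathbf{Sets}$ let $U:\mathbf{Sets}\to\mathbf{Sets}$ be the functor $X\mapsto X^S$, right adjoint to $F: X\mapsto S\times X$, with $T=UF$ the associated state monad. Then $U$ is monadic, i.e. the comparison functor $K:\mathbf{Sets}\to\mathbf{Alg}^T$, $K(Y)=(Y^S,\epsilon_Y^S)$, $K(g)=g^S$, is an equivalence of categories.
   Context: For a set $X$, $TX=(S\times X)^S$; the unit $\eta_X:X\to TX$ sends $x$ to $s\mapsto (s,x)$; the multiplication $\mu_X:TTX\to TX$ is $(\epsilon_{S\times X})^S$, i.e. it sends $s\mapsto (c[s], s'\mapsto (c'[s,s'],x[s,s']))$ to $s\mapsto (c'[s,c[s]],x[s,c[s]])$. Here $\epsilon_Z:S\times Z^S\to Z$, $(s,f)\mapsto f(s)$, is evaluation (the counit of the adjunction $F\dashv U$). A $T$-algebra is a pair $(X,h)$ with $h:TX\to X$ satisfying $h\circ Th=h\circ\mu_X$ and $h\circ\eta_X=\mathrm{id}_X$; a morphism $(X,h)\to(X',h')$ is a map $u:X\to X'$ with $h'\circ Tu=u\circ h$; these form the category $\mathbf{Alg}^T$. "Monadic" here means that $K$ is an equivalence of categories (not necessarily an isomorphism). *)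

theory Defs
  imports "HOL-Library.FuncSet"
begin

(* The category Sets is modelled by carrier sets (of arbitrary HOL types) with
  morphisms the extensional functions  Y ->E Y'. *)

definition TX :: "'s set \<Rightarrow> 'x set \<Rightarrow> ('s \<Rightarrow> 's \<times> 'x) set" where
  "TX S X = (S \<rightarrow>\<^sub>E S \<times> X)"

definition st_eta :: "'s set \<Rightarrow> 'x \<Rightarrow> ('s \<Rightarrow> 's \<times> 'x)" where
  "st_eta S x = (\<lambda>s\<in>S. (s, x))"

definition st_map :: "'s set \<Rightarrow> ('x \<Rightarrow> 'y) \<Rightarrow> ('s \<Rightarrow> 's \<times> 'x) \<Rightarrow> ('s \<Rightarrow> 's \<times> 'y)" where
  "st_map S u c = (\<lambda>s\<in>S. (fst (c s), u (snd (c s))))"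

(* Multiplication mu_X = (epsilon_{S \<times> X})^S. *)
definition st_mu :: "'s set \<Rightarrow> ('s \<Rightarrow> 's \<times> ('s \<Rightarrow> 's \<times> 'x)) \<Rightarrow> ('s \<Rightarrow> 's \<times> 'x)" where
  "st_mu S cc = (\<lambda>s\<in>S. (snd (cc s)) (fst (cc s)))"

definition is_alg :: "'s set \<Rightarrow> 'x set \<Rightarrow> (('s \<Rightarrow> 's \<times> 'x) \<Rightarrow> 'x) \<Rightarrow> bool" where
  "is_alg S X h \<longleftrightarrow>
     (\<forall>c\<in>TX S X. h c \<in> X) \<and>
     (\<forall>cc\<in>TX S (TX S X). h (st_map S h cc) = h (st_mu S cc)) \<and>
     (\<forall>x\<in>X. h (st_eta S x) = x)"

definition alg_hom :: "'s set \<Rightarrow> 'x set \<times> (('s \<Rightarrow> 's \<times> 'x) \<Rightarrow> 'x)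
                        \<Rightarrow> 'y set \<times> (('s \<Rightarrow> 's \<times> 'y) \<Rightarrow> 'y) \<Rightarrow> ('x \<Rightarrow> 'y) set" where
  "alg_hom S A B = {u. u \<in> fst A \<rightarrow>\<^sub>E fst B \<and>
       (\<forall>c\<in>TX S (fst A). snd B (st_map S u c) = u (snd A c))}"

definition alg_iso :: "'s set \<Rightarrow> 'x set \<times> (('s \<Rightarrow> 's \<times> 'x) \<Rightarrow> 'x)
                        \<Rightarrow> 'y set \<times> (('s \<Rightarrow> 's \<times> 'y) \<Rightarrow> 'y) \<Rightarrow> bool" where
  "alg_iso S A B \<longleftrightarrow> (\<exists>u v. u \<in> alg_hom S A B \<and> v \<in> alg_hom S B A \<and>
       (\<forall>x\<in>fst A. v (u x) = x) \<and> (\<forall>y\<in>fst B. u (v y) = y))"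

definition st_eps :: "'s \<times> ('s \<Rightarrow> 'y) \<Rightarrow> 'y" where
  "st_eps p = (snd p) (fst p)"

definition st_eps_pow :: "'s set \<Rightarrow> ('s \<Rightarrow> 's \<times> ('s \<Rightarrow> 'y)) \<Rightarrow> ('s \<Rightarrow> 'y)" where
  "st_eps_pow S c = (\<lambda>s\<in>S. st_eps (c s))"

definition K_obj :: "'s set \<Rightarrow> 'y set \<Rightarrow> ('s \<Rightarrow> 'y) set \<times> (('s \<Rightarrow> 's \<times> ('s \<Rightarrow> 'y)) \<Rightarrow> ('s \<Rightarrow> 'y))" where
  "K_obj S Y = (S \<rightarrow>\<^sub>E Y, st_eps_pow S)"

definition K_mor :: "'s set \<Rightarrow> 'y set \<Rightarrow> ('y \<Rightarrow> 'z) \<Rightarrow> ('s \<Rightarrow> 'y) \<Rightarrow> ('s \<Rightarrow> 'z)" where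
  "K_mor S Y g = (\<lambda>f\<in>S \<rightarrow>\<^sub>E Y. \<lambda>s\<in>S. g (f s))"

end

theory Submission
  imports Defs
begin

text \<open>Write put s x = h (\<lambda>_. (s, x)) for the value an algebra (X, h) assigns to the computation that
  overwrites the state by s and returns x. The algebra laws give put s (put s' x) = put s' x, so
  every put s x lands in the set Y of elements fixed by all put s, and on Y-valued computations h
  ignores the states. Hence x \<mapsto> (s \<mapsto> put s x) and f \<mapsto> h (\<lambda>t. (t, f t)) are inverse algebra
  morphisms between (X, h) and K Y; this part needs no assumption on S.

  Conversely, applying the homomorphism law of u : K Y \<rightarrow> K Y' to the computation that jumps to a
  fixed state s shows u f t = u (\<lambda>_. f t) s, so u = K g for g y = u (\<lambda>_. y) s; both this and
  faithfulness of K need S \<noteq> {}.\<close>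

lemma TX_memD:
  assumes "c \<in> TX S X" and "t \<in> S"
  shows "fst (c t) \<in> S" and "snd (c t) \<in> X"
  using PiE_mem[OF assms[unfolded TX_def]] by (simp_all add: mem_Times_iff)

lemma TX_restrictI:
  assumes "\<And>t. t \<in> S \<Longrightarrow> a t \<in> S" and "\<And>t. t \<in> S \<Longrightarrow> x t \<in> X"
  shows "(\<lambda>t\<in>S. (a t, x t)) \<in> TX S X"
  using assms by (auto simp: TX_def)

lemma st_eps_pow_in_PiE:
  assumes "c \<in> TX S (S \<rightarrow>\<^sub>E Y)"
  shows "st_eps_pow S c \<in> S \<rightarrow>\<^sub>E Y"
  using TX_memD[OF assms] by (auto simp: st_eps_pow_def st_eps_def)

lemma is_alg_K_obj: "is_alg S (fst (K_obj S Y)) (snd (K_obj S Y))"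
  unfolding is_alg_def K_obj_def
proof (simp, intro conjI ballI)
  fix c assume "c \<in> TX S (S \<rightarrow>\<^sub>E Y)"
  then show "st_eps_pow S c \<in> S \<rightarrow>\<^sub>E Y" by (rule st_eps_pow_in_PiE)
next
  fix cc assume "cc \<in> TX S (TX S (S \<rightarrow>\<^sub>E Y))"
  then show "st_eps_pow S (st_map S (st_eps_pow S) cc) = st_eps_pow S (st_mu S cc)"
    unfolding st_eps_pow_def st_eps_def st_map_def st_mu_def
    by (intro restrict_ext) (simp add: TX_memD)
next
  fix f assume "f \<in> S \<rightarrow>\<^sub>E Y"
  then show "st_eps_pow S (st_eta S f) = f"
    unfolding st_eps_pow_def st_eps_def st_eta_def by (auto intro: PiE_ext)
qed

lemma K_mor_in_PiE: "g \<in> Y \<rightarrow>\<^sub>E Y' \<Longrightarrow> K_mor S Y g \<in> (S \<rightarrow>\<^sub>E Y) \<rightarrow>\<^sub>E (S \<rightarrow>\<^sub>E Y')"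
  by (auto simp: K_mor_def)

lemma K_mor_apply: "f \<in> S \<rightarrow>\<^sub>E Y \<Longrightarrow> K_mor S Y g f = (\<lambda>s\<in>S. g (f s))"
  by (simp add: K_mor_def)

lemma K_mor_compose:
  assumes g: "g \<in> Y \<rightarrow>\<^sub>E Y'"
  shows "K_mor S Y (compose Y g' g) = compose (S \<rightarrow>\<^sub>E Y) (K_mor S Y' g') (K_mor S Y g)"
  unfolding compose_def[of "S \<rightarrow>\<^sub>E Y"] K_mor_def[of S Y "compose Y g' g"]
proof (rule restrict_ext)
  fix f assume f: "f \<in> S \<rightarrow>\<^sub>E Y"
  then have gf: "K_mor S Y g f \<in> S \<rightarrow>\<^sub>E Y'" using K_mor_in_PiE[OF g] by (rule PiE_mem[rotated])
  have "(\<lambda>s\<in>S. compose Y g' g (f s)) = (\<lambda>s\<in>S. g' (K_mor S Y g f s))"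
    using f by (intro restrict_ext) (auto simp: K_mor_apply compose_def)
  also have "\<dots> = K_mor S Y' g' (K_mor S Y g f)"
    using gf by (rule K_mor_apply[symmetric])
  finally show "(\<lambda>s\<in>S. compose Y g' g (f s)) = K_mor S Y' g' (K_mor S Y g f)" .
qed

lemma K_mor_id: "K_mor S Y (restrict id Y) = restrict id (S \<rightarrow>\<^sub>E Y)"
  unfolding K_mor_def
  by (intro restrict_ext) (auto simp: fun_eq_iff PiE_def extensional_def)

lemma K_mor_alg_hom:
  assumes "g \<in> Y \<rightarrow>\<^sub>E Y'"
  shows "K_mor S Y g \<in> alg_hom S (K_obj S Y) (K_obj S Y')"
  unfolding alg_hom_def K_obj_def
proof (simp, intro conjI ballI)
  show "K_mor S Y g \<in> (S \<rightarrow>\<^sub>E Y) \<rightarrow>\<^sub>E S \<rightarrow>\<^sub>E Y'" using assms by (rule K_mor_in_PiE)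
next
  fix c assume c: "c \<in> TX S (S \<rightarrow>\<^sub>E Y)"
  show "st_eps_pow S (st_map S (K_mor S Y g) c) = K_mor S Y g (st_eps_pow S c)"
    using st_eps_pow_in_PiE[OF c] TX_memD[OF c]
    unfolding K_mor_def st_eps_pow_def st_eps_def st_map_def
    by (simp, intro restrict_ext) simp
qed

lemma inj_on_K_mor:
  assumes "S \<noteq> {}"
  shows "inj_on (K_mor S Y) (Y \<rightarrow>\<^sub>E Y')"
proof (rule inj_onI)
  fix g1 g2 assume g1: "g1 \<in> Y \<rightarrow>\<^sub>E Y'" and g2: "g2 \<in> Y \<rightarrow>\<^sub>E Y'"
    and eq: "K_mor S Y g1 = K_mor S Y g2"
  obtain s where s: "s \<in> S" using assms by blast
  show "g1 = g2"
  proof (rule PiE_ext[OF g1 g2])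
    fix y assume "y \<in> Y"
    then have "(\<lambda>_\<in>S. y) \<in> S \<rightarrow>\<^sub>E Y" by simp
    then show "g1 y = g2 y"
      using fun_cong[OF fun_cong[OF eq, of "\<lambda>_\<in>S. y"], of s] s by (simp add: K_mor_def)
  qed
qed

lemma alg_hom_K_obj_apply_const:
  assumes u: "u \<in> alg_hom S (K_obj S Y) (K_obj S Y')"
    and f: "f \<in> S \<rightarrow>\<^sub>E Y" and s: "s \<in> S" and t: "t \<in> S"
  shows "u f t = u (\<lambda>_\<in>S. f t) s"
proof -
  let ?c = "\<lambda>t\<in>S. (s, \<lambda>_\<in>S. f t)"
  have c: "?c \<in> TX S (S \<rightarrow>\<^sub>E Y)" using f s by (auto simp: TX_def)
  have "st_eps_pow S ?c = f"
    by (rule PiE_ext[OF st_eps_pow_in_PiE[OF c] f]) (simp add: st_eps_pow_def st_eps_def s)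
  then have "st_eps_pow S (st_map S u ?c) = u f"
    using u c by (simp add: alg_hom_def K_obj_def)
  then have "st_eps_pow S (st_map S u ?c) t = u f t" by simp
  then show ?thesis using s t by (simp add: st_eps_pow_def st_eps_def st_map_def)
qed

lemma alg_hom_K_obj_in_image_K_mor:
  assumes "S \<noteq> {}" and u: "u \<in> alg_hom S (K_obj S Y) (K_obj S Y')"
  shows "u \<in> K_mor S Y ` (Y \<rightarrow>\<^sub>E Y')"
proof -
  obtain s where s: "s \<in> S" using assms by blast
  have uE: "u \<in> (S \<rightarrow>\<^sub>E Y) \<rightarrow>\<^sub>E (S \<rightarrow>\<^sub>E Y')" using u by (simp add: alg_hom_def K_obj_def)
  define g where "g = (\<lambda>y\<in>Y. u (\<lambda>_\<in>S. y) s)"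
  have "u (\<lambda>_\<in>S. y) s \<in> Y'" if "y \<in> Y" for y
    using PiE_mem[OF PiE_mem[OF uE] s] that by simp
  then have g: "g \<in> Y \<rightarrow>\<^sub>E Y'" by (simp add: g_def)
  have "K_mor S Y g = u"
  proof (rule PiE_ext[OF K_mor_in_PiE[OF g] uE])
    fix f assume f: "f \<in> S \<rightarrow>\<^sub>E Y"
    show "K_mor S Y g f = u f"
    proof (rule PiE_ext)
      show "K_mor S Y g f \<in> S \<rightarrow>\<^sub>E Y'" "u f \<in> S \<rightarrow>\<^sub>E Y'"
        using PiE_mem[OF K_mor_in_PiE[OF g] f] PiE_mem[OF uE f] .
      fix t assume t: "t \<in> S"
      then have "f t \<in> Y" using f by (rule PiE_mem[rotated])
      then show "K_mor S Y g f t = u f t"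
        using f t alg_hom_K_obj_apply_const[OF u f s t] by (simp add: K_mor_apply g_def)
    qed
  qed
  then show ?thesis using g by blast
qed

lemma bij_betw_K_mor:
  assumes "S \<noteq> {}"
  shows "bij_betw (K_mor S Y) (Y \<rightarrow>\<^sub>E Y') (alg_hom S (K_obj S Y) (K_obj S Y'))"
proof (rule bij_betw_imageI)
  show "inj_on (K_mor S Y) (Y \<rightarrow>\<^sub>E Y')" using assms by (rule inj_on_K_mor)
  show "K_mor S Y ` (Y \<rightarrow>\<^sub>E Y') = alg_hom S (K_obj S Y) (K_obj S Y')"
    using K_mor_alg_hom alg_hom_K_obj_in_image_K_mor[OF assms] by (intro subset_antisym) auto
qed

locale state_algebra =
  fixes S :: "'s set" and X :: "'x set" and h :: "('s \<Rightarrow> 's \<times> 'x) \<Rightarrow> 'x"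
  assumes is_alg: "is_alg S X h"
begin

lemma closed: "c \<in> TX S X \<Longrightarrow> h c \<in> X"
  using is_alg unfolding is_alg_def by blast

lemma unit: "x \<in> X \<Longrightarrow> h (\<lambda>t\<in>S. (t, x)) = x"
  using is_alg unfolding is_alg_def st_eta_def by blast

lemma assoc:
  assumes a: "\<And>t. t \<in> S \<Longrightarrow> a t \<in> S" and c: "\<And>t. t \<in> S \<Longrightarrow> c t \<in> TX S X"
  shows "h (\<lambda>t\<in>S. (a t, h (c t))) = h (\<lambda>t\<in>S. c t (a t))"
proof -
  let ?cc = "\<lambda>t\<in>S. (a t, c t)"
  have "?cc \<in> TX S (TX S X)" using a c by (rule TX_restrictI)
  then have "h (st_map S h ?cc) = h (st_mu S ?cc)"
    using is_alg unfolding is_alg_def by blast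
  moreover have "st_map S h ?cc = (\<lambda>t\<in>S. (a t, h (c t)))"
    unfolding st_map_def by (rule restrict_ext) simp
  moreover have "st_mu S ?cc = (\<lambda>t\<in>S. c t (a t))"
    unfolding st_mu_def by (rule restrict_ext) simp
  ultimately show ?thesis by simp
qed

definition put :: "'s \<Rightarrow> 'x \<Rightarrow> 'x" where
  "put s x = h (\<lambda>_\<in>S. (s, x))"

lemma put_closed: "s \<in> S \<Longrightarrow> x \<in> X \<Longrightarrow> put s x \<in> X"
  unfolding put_def by (intro closed TX_restrictI)

lemma put_put: "s \<in> S \<Longrightarrow> s' \<in> S \<Longrightarrow> x \<in> X \<Longrightarrow> put s (put s' x) = put s' x"
  unfolding put_def using assoc[of "\<lambda>_. s" "\<lambda>_. \<lambda>_\<in>S. (s', x)"] by (simp add: TX_restrictI)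

definition put_fixed :: "'x set" where
  "put_fixed = {x \<in> X. \<forall>s\<in>S. put s x = x}"

lemma put_in_put_fixed: "s \<in> S \<Longrightarrow> x \<in> X \<Longrightarrow> put s x \<in> put_fixed"
  by (simp add: put_fixed_def put_closed put_put)

lemma put_fixed_subset: "put_fixed \<subseteq> X"
  by (auto simp: put_fixed_def)

lemma state_irrelevant_on_put_fixed:
  assumes a: "\<And>t. t \<in> S \<Longrightarrow> a t \<in> S" and b: "\<And>t. t \<in> S \<Longrightarrow> b t \<in> S"
    and y: "\<And>t. t \<in> S \<Longrightarrow> y t \<in> put_fixed"
  shows "h (\<lambda>t\<in>S. (a t, y t)) = h (\<lambda>t\<in>S. (b t, y t))"
proof -
  have "h (\<lambda>t\<in>S. (a t, y t)) = h (\<lambda>t\<in>S. (a t, h (\<lambda>_\<in>S. (b t, y t))))"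
    using b y by (intro arg_cong[where f = h] restrict_ext) (simp add: put_fixed_def flip: put_def)
  also have "\<dots> = h (\<lambda>t\<in>S. (\<lambda>_\<in>S. (b t, y t)) (a t))"
    using a b y put_fixed_subset by (intro assoc TX_restrictI) auto
  also have "\<dots> = h (\<lambda>t\<in>S. (b t, y t))"
    using a by (intro arg_cong[where f = h] restrict_ext) simp
  finally show ?thesis .
qed

definition to_fun :: "'x \<Rightarrow> 's \<Rightarrow> 'x" where
  "to_fun = (\<lambda>x\<in>X. \<lambda>s\<in>S. put s x)"

definition of_fun :: "('s \<Rightarrow> 'x) \<Rightarrow> 'x" where
  "of_fun = (\<lambda>f\<in>S \<rightarrow>\<^sub>E put_fixed. h (\<lambda>t\<in>S. (t, f t)))"

lemma diag_in_TX: "f \<in> S \<rightarrow>\<^sub>E put_fixed \<Longrightarrow> (\<lambda>t\<in>S. (t, f t)) \<in> TX S X"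
  using put_fixed_subset by (intro TX_restrictI) auto

lemma to_fun_in_PiE: "to_fun \<in> X \<rightarrow>\<^sub>E (S \<rightarrow>\<^sub>E put_fixed)"
  by (simp add: to_fun_def put_in_put_fixed)

lemma of_fun_in_PiE: "of_fun \<in> (S \<rightarrow>\<^sub>E put_fixed) \<rightarrow>\<^sub>E X"
  by (simp add: of_fun_def closed diag_in_TX)

lemma to_fun_of_fun:
  assumes f: "f \<in> S \<rightarrow>\<^sub>E put_fixed"
  shows "to_fun (of_fun f) = f"
proof (rule PiE_ext[OF PiE_mem[OF to_fun_in_PiE PiE_mem[OF of_fun_in_PiE f]] f])
  fix s assume s: "s \<in> S"
  have "to_fun (of_fun f) s = h (\<lambda>_\<in>S. (s, h (\<lambda>t\<in>S. (t, f t))))"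
    using PiE_mem[OF of_fun_in_PiE f] s f by (simp add: to_fun_def put_def of_fun_def)
  also have "\<dots> = h (\<lambda>_\<in>S. (\<lambda>t\<in>S. (t, f t)) s)"
    using s diag_in_TX[OF f] by (intro assoc)
  also have "\<dots> = put s (f s)" using s by (simp add: put_def)
  also have "\<dots> = f s" using PiE_mem[OF f s] s by (simp add: put_fixed_def)
  finally show "to_fun (of_fun f) s = f s" .
qed

lemma of_fun_to_fun:
  assumes x: "x \<in> X"
  shows "of_fun (to_fun x) = x"
proof -
  have "of_fun (to_fun x) = h (\<lambda>t\<in>S. (t, h (\<lambda>_\<in>S. (t, x))))"
    using PiE_mem[OF to_fun_in_PiE x] x unfolding of_fun_def
    by (simp add: to_fun_def put_def cong: restrict_cong)
  also have "\<dots> = h (\<lambda>t\<in>S. (\<lambda>_\<in>S. (t, x)) t)"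
    using x by (intro assoc TX_restrictI)
  also have "\<dots> = h (\<lambda>t\<in>S. (t, x))"
    by (intro arg_cong[where f = h] restrict_ext) simp
  also have "\<dots> = x" using x by (rule unit)
  finally show ?thesis .
qed

lemma of_fun_alg_hom: "of_fun \<in> alg_hom S (K_obj S put_fixed) (X, h)"
  unfolding alg_hom_def K_obj_def
proof (simp add: of_fun_in_PiE, intro ballI)
  fix c assume c: "c \<in> TX S (S \<rightarrow>\<^sub>E put_fixed)"
  let ?a = "\<lambda>t. fst (c t)" and ?f = "\<lambda>t. snd (c t)"
  have a: "t \<in> S \<Longrightarrow> ?a t \<in> S" and f: "t \<in> S \<Longrightarrow> ?f t \<in> S \<rightarrow>\<^sub>E put_fixed" for t
    using TX_memD[OF c] by auto
  have f_at_a: "t \<in> S \<Longrightarrow> ?f t (?a t) \<in> put_fixed" for t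
    using a f by (blast intro: PiE_mem)
  have "h (st_map S of_fun c) = h (\<lambda>t\<in>S. (?a t, h (\<lambda>t'\<in>S. (t', ?f t t'))))"
    unfolding st_map_def using f by (intro arg_cong[where f = h] restrict_ext) (simp add: of_fun_def)
  also have "\<dots> = h (\<lambda>t\<in>S. (\<lambda>t'\<in>S. (t', ?f t t')) (?a t))"
    using a f by (intro assoc diag_in_TX)
  also have "\<dots> = h (\<lambda>t\<in>S. (?a t, ?f t (?a t)))"
    using a by (intro arg_cong[where f = h] restrict_ext) simp
  also have "\<dots> = h (\<lambda>t\<in>S. (t, ?f t (?a t)))"
    using a f_at_a by (intro state_irrelevant_on_put_fixed)
  also have "\<dots> = of_fun (st_eps_pow S c)"
    using st_eps_pow_in_PiE[OF c] unfolding of_fun_def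
    by (simp, intro arg_cong[where f = h] restrict_ext) (simp add: st_eps_pow_def st_eps_def)
  finally show "h (st_map S of_fun c) = of_fun (st_eps_pow S c)" .
qed

lemma to_fun_alg_hom: "to_fun \<in> alg_hom S (X, h) (K_obj S put_fixed)"
  unfolding alg_hom_def K_obj_def
proof (simp add: to_fun_in_PiE, intro ballI)
  fix c assume c: "c \<in> TX S X"
  have hc: "h c \<in> X" using c by (rule closed)
  show "st_eps_pow S (st_map S to_fun c) = to_fun (h c)"
  proof (rule PiE_ext)
    show "st_eps_pow S (st_map S to_fun c) \<in> S \<rightarrow>\<^sub>E put_fixed"
      using TX_memD[OF c] PiE_mem[OF PiE_mem[OF to_fun_in_PiE]]
      by (auto simp: st_eps_pow_def st_eps_def st_map_def)
    show "to_fun (h c) \<in> S \<rightarrow>\<^sub>E put_fixed" using hc by (rule PiE_mem[OF to_fun_in_PiE])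
    fix s assume s: "s \<in> S"
    have "st_eps_pow S (st_map S to_fun c) s = put (fst (c s)) (snd (c s))"
      using s TX_memD[OF c s] by (simp add: st_eps_pow_def st_eps_def st_map_def to_fun_def)
    also have "\<dots> = h (\<lambda>_\<in>S. c s)"
      unfolding put_def by (intro arg_cong[where f = h] restrict_ext) simp
    also have "\<dots> = h (\<lambda>_\<in>S. (s, h c))"
      using assoc[of "\<lambda>_. s" "\<lambda>_. c"] s c by simp
    also have "\<dots> = to_fun (h c) s" using hc s by (simp add: to_fun_def put_def)
    finally show "st_eps_pow S (st_map S to_fun c) s = to_fun (h c) s" .
  qed
qed

lemma alg_iso_K_obj_put_fixed: "alg_iso S (K_obj S put_fixed) (X, h)"
  unfolding alg_iso_def
  using of_fun_alg_hom to_fun_alg_hom to_fun_of_fun of_fun_to_fun by (auto simp: K_obj_def)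

end

theorem theorem1:
  fixes S :: "'s set"
  assumes "S \<noteq> {}"
  shows
    \<comment> \<open>K is a well-defined functor Sets \<rightarrow> Alg^T\<close>
    "(\<forall>Y :: 'a set. is_alg S (fst (K_obj S Y)) (snd (K_obj S Y)))
   \<and> (\<forall>(Y :: 'a set) (g :: 'a \<Rightarrow> 'b) (Y' :: 'b set) (g' :: 'b \<Rightarrow> 'c) (Y'' :: 'c set).
        g \<in> Y \<rightarrow>\<^sub>E Y' \<longrightarrow> g' \<in> Y' \<rightarrow>\<^sub>E Y'' \<longrightarrow>
        K_mor S Y (compose Y g' g) = compose (fst (K_obj S Y)) (K_mor S Y' g') (K_mor S Y g))
   \<and> (\<forall>Y :: 'a set. K_mor S Y (restrict id Y) = restrict id (fst (K_obj S Y)))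
    \<comment> \<open>K is fully faithful\<close>
   \<and> (\<forall>(Y :: 'a set) (Y' :: 'b set).
        bij_betw (K_mor S Y) (Y \<rightarrow>\<^sub>E Y') (alg_hom S (K_obj S Y) (K_obj S Y')))
    \<comment> \<open>K is essentially surjective\<close>
   \<and> (\<forall>(X :: 'x set) h. is_alg S X h \<longrightarrow> (\<exists>Y :: 'x set. alg_iso S (K_obj S Y) (X, h)))"
proof -
  have "\<exists>Y :: 'x set. alg_iso S (K_obj S Y) (X, h)" if "is_alg S X h" for X :: "'x set" and h
    using state_algebra.alg_iso_K_obj_put_fixed[OF state_algebra.intro[OF that]] by blast
  then show ?thesis
    using is_alg_K_obj K_mor_compose K_mor_id bij_betw_K_mor[OF assms] by (auto simp: K_obj_def)
qed

end
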